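(* Let $n \ge 1$ and $a \in \mathbb{N}$ with $a^2 \le n$. Then the set of diagonal marginal tracial states on $M_n(\mathbb{C}) \otimes M_n(\mathbb{C})$ that are extremal points of $\Gamma(n)$ and have rank exactly $a$ is dense (in the norm topology of the finite-dimensional space of linear functionals on $M_n(\mathbb{C}) \otimes M_n(\mathbb{C})$) in the set of all diagonal marginal tracial states on $M_n(\mathbb{C}) \otimes M_n(\mathbb{C})$ of rank at most $a$.
   Context: $\mathrm{tr}$ is the normalized trace on $M_n(\mathbb{C})$ and ${}^tB$ the transpose with respect to a fixed orthonormal basis. $UCPT(n)$ is the convex set of unital, completely positive, trace-preserving linear maps $M_n(\mathbb{C}) \to M_n(\mathbb{C})$. $\Gamma(n)$ is the convex set of states $\rho$ on $M_n(\mathbb{C}) \otimes M_n(\mathbb{C})$ with $\rho(A \otimes I) = \mathrm{tr}(A)$ and $\rho(I\otimes B) = \mathrm{tr}(B)$ for all $A,B$ (marginal tracial states). The map $\pi: UCPT(n) \to \Gamma(n)$, $\pi(\varphi)(A\otimes B) = \mathrm{tr}(\varphi(A)\,{}^tB)$, is a bijection. The rank of a state is the rank of its density matrix. A linear map $\varphi$ on $M_n(\mathbb{C})$ is diagonal if $\varphi(A) = C \circ A$ (Schur/entrywise product) for some $C \in M_n(\mathbb{C})$; a marginal tracial state is diagonal if it equals $\pi(\varphi)$ for a diagonal $\varphi \in UCPT(n)$. *)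

theory Defs
  imports "HOL-Analysis.Analysis"
begin

text \<open>Matrices in M_n(C) are complex^'n^'n for a finite index type 'n (n = CARD('n)).
  M_n(C) \<otimes> M_n(C) is identified with M_{n^2}(C) = complex^('n*'n)^('n*'n) via the Kronecker product.
  A state on M_n \<otimes> M_n is represented by its density matrix D: rho(X) = trace (D ** X).\<close>

type_synonym 'n cmat = "complex^'n^'n"
type_synonym 'n tmat = "complex^('n \<times> 'n)^('n \<times> 'n)"

definition kron :: "'n::finite cmat \<Rightarrow> 'n cmat \<Rightarrow> 'n tmat" where
  "kron A B = (\<chi> r c. A$(fst r)$(fst c) * B$(snd r)$(snd c))"

definition ntr :: "'n::finite cmat \<Rightarrow> complex" where
  "ntr A = trace A / of_nat CARD('n)"

definition psd :: "complex^'m^'m \<Rightarrow> bool" where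
  "psd M \<longleftrightarrow> (\<forall>x::complex^'m.
     let s = (\<Sum>i\<in>UNIV. \<Sum>j\<in>UNIV. cnj (x$i) * M$i$j * x$j) in s \<in> \<real> \<and> 0 \<le> Re s)"

definition density :: "'n::finite tmat \<Rightarrow> bool" where
  "density D \<longleftrightarrow> psd D \<and> trace D = 1"

definition state_of :: "'n::finite tmat \<Rightarrow> 'n tmat \<Rightarrow> complex" where
  "state_of D X = trace (D ** X)"

definition Gamma :: "'n::finite tmat set" where
  "Gamma = {D. density D \<and>
     (\<forall>A. state_of D (kron A (mat 1)) = ntr A) \<and>
     (\<forall>B. state_of D (kron (mat 1) B) = ntr B)}"

definition psd_block :: "nat \<Rightarrow> (nat \<Rightarrow> nat \<Rightarrow> 'n::finite cmat) \<Rightarrow> bool" where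
  "psd_block k A \<longleftrightarrow> (\<forall>v :: nat \<Rightarrow> complex^'n.
     let s = (\<Sum>i<k. \<Sum>j<k. \<Sum>p\<in>UNIV. \<Sum>q\<in>UNIV. cnj (v i $ p) * A i j $ p $ q * v j $ q)
     in s \<in> \<real> \<and> 0 \<le> Re s)"

definition completely_positive :: "('n::finite cmat \<Rightarrow> 'n cmat) \<Rightarrow> bool" where
  "completely_positive \<phi> \<longleftrightarrow>
     (\<forall>k A. psd_block k A \<longrightarrow> psd_block k (\<lambda>i j. \<phi> (A i j)))"

definition UCPT :: "('n::finite cmat \<Rightarrow> 'n cmat) set" where
  "UCPT = {\<phi>. (\<forall>A B. \<phi> (A + B) = \<phi> A + \<phi> B) \<and> (\<forall>c A. \<phi> (c *s A) = c *s \<phi> A) \<and>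
              completely_positive \<phi> \<and> \<phi> (mat 1) = mat 1 \<and> (\<forall>A. ntr (\<phi> A) = ntr A)}"

text \<open>pi(phi): the state with rho(A \<otimes> B) = tr(phi(A) B^t); D represents pi(phi) iff this holds
  for all A, B (product tensors span M_n \<otimes> M_n)\<close>
definition represents_pi :: "'n::finite tmat \<Rightarrow> ('n cmat \<Rightarrow> 'n cmat) \<Rightarrow> bool" where
  "represents_pi D \<phi> \<longleftrightarrow> (\<forall>A B. state_of D (kron A B) = ntr (\<phi> A ** transpose B))"

definition schur :: "'n::finite cmat \<Rightarrow> 'n cmat \<Rightarrow> 'n cmat" where
  "schur C A = (\<chi> i j. C$i$j * A$i$j)"

definition diagonal_map :: "('n::finite cmat \<Rightarrow> 'n cmat) \<Rightarrow> bool" where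
  "diagonal_map \<phi> \<longleftrightarrow> (\<exists>C. \<phi> = schur C)"

definition diagonal_states :: "'n::finite tmat set" where
  "diagonal_states = {D \<in> Gamma. \<exists>\<phi>\<in>UCPT. diagonal_map \<phi> \<and> represents_pi D \<phi>}"

end

theory Submission
  imports Defs
begin

(* A diagonal marginal tracial state has its density supported on span{e_p \<otimes> e_p}, and its
   compression to that block is (1/n) times a Gram matrix.  Hence every diagonal state of rank
   at most a is a Gram state G(X), with density (1/n) \<Sum>_{p,r} <x_p, x_r> E_pr \<otimes> E_pr,
   whose unit rows x_p lie in a coordinate subspace C^T, |T| = a.  Conversely every Gram state
   with unit rows is diagonal: Schur multiplication by a Gram matrix is a UCPT map.
   If moreover the rank-one matrices x_p x_p^* span M_T ("spanning frame"), then G(X) is an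
   extreme point of Gamma(n) -- a state in a face through G(X) shares its isotropic vectors and
   the difference of the two compressions is forced to vanish -- and rank G(X) = |T|.
   Because a^2 \<le> n, a greedy perturbation of the rows yields spanning frames arbitrarily
   close to X, and continuity of X \<mapsto> G(X) gives the density statement. *)

section \<open>Positive semidefinite matrices via quadratic forms\<close>

definition qform :: "complex^'m^'m \<Rightarrow> complex^'m \<Rightarrow> complex" where
  "qform M x = (\<Sum>i\<in>UNIV. \<Sum>j\<in>UNIV. cnj (x$i) * M$i$j * x$j)"

definition sform :: "complex^'m^'m \<Rightarrow> complex^'m \<Rightarrow> complex^'m \<Rightarrow> complex" where
  "sform M x y = (\<Sum>i\<in>UNIV. \<Sum>j\<in>UNIV. cnj (x$i) * M$i$j * y$j)"

lemma psd_qform: "psd M \<longleftrightarrow> (\<forall>x. qform M x \<in> \<real> \<and> 0 \<le> Re (qform M x))"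
  by (simp add: psd_def qform_def Let_def)

lemma qform_expand:
  "qform M (x + c *s y) = qform M x + c * sform M x y + cnj c * sform M y x + cnj c * c * qform M y"
  unfolding qform_def sform_def
  by (simp add: algebra_simps sum.distrib sum_distrib_left)

lemma qform_scaleR_comb:
  "qform (a *\<^sub>R A + b *\<^sub>R B) x = complex_of_real a * qform A x + complex_of_real b * qform B x"
proof -
  have e: "(a *\<^sub>R A + b *\<^sub>R B)$i$j = complex_of_real a * A$i$j + complex_of_real b * B$i$j" for i j
    by (simp add: scaleR_conv_of_real[where 'a=complex])
  show ?thesis unfolding qform_def e by (simp add: algebra_simps sum.distrib sum_distrib_left)
qed

lemma sform_diff_right: "sform M x (y1 - y2) = sform M x y1 - sform M x y2"
  unfolding sform_def by (simp add: algebra_simps sum_subtractf)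

lemma sform_diff_left: "sform M (x1 - x2) y = sform M x1 y - sform M x2 y"
  unfolding sform_def by (simp add: algebra_simps sum_subtractf)

lemma nonneg_quadratic_linear_zero:
  fixes r g :: real
  assumes "\<And>t. 0 \<le> t * r + t^2 * g" "0 \<le> g"
  shows "r = 0"
proof (rule ccontr)
  assume "r \<noteq> 0"
  define h where "h = g + 1"
  have h: "h > 0" using assms(2) h_def by simp
  define t where "t = - r / (2 * h)"
  have "0 \<le> t * r + t^2 * g" by (rule assms(1))
  also have "t * r + t^2 * g \<le> t * r + t^2 * h" by (simp add: h_def algebra_simps)
  also have "t * r + t^2 * h = - (r^2 / (4*h))"
    using h by (simp add: t_def power2_eq_square field_simps)
  also have "\<dots> < 0" using \<open>r \<noteq> 0\<close> h by simp
  finally show False by simp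
qed

lemma psd_isotropic:
  assumes "psd P" "qform P x = 0"
  shows "sform P x y = 0 \<and> sform P y x = 0"
proof -
  let ?a = "sform P x y" and ?b = "sform P y x" and ?g = "qform P y"
  have P: "\<And>z. qform P z \<in> \<real> \<and> 0 \<le> Re (qform P z)" using assms(1) psd_qform by blast
  have g: "Im ?g = 0" "0 \<le> Re ?g" using P complex_is_Real_iff by auto
  have e: "\<And>c. qform P (x + c *s y) = c * ?a + cnj c * ?b + cnj c * c * ?g"
    using qform_expand[of P x _ y] assms(2) by simp
  have im: "Im (qform P (x + c *s y)) = 0" for c using P complex_is_Real_iff by blast
  have r1: "0 \<le> t * Re (?a + ?b) + t^2 * Re ?g" for t :: real
    using P[of "x + complex_of_real t *s y"] by (simp add: e power2_eq_square algebra_simps)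
  have r2: "0 \<le> t * (- Im (?a - ?b)) + t^2 * Re ?g" for t :: real
    using P[of "x + (\<i> * complex_of_real t) *s y"] by (simp add: e power2_eq_square algebra_simps)
  have "Im (?a + ?b) = 0" using im[of 1] g e[of 1] by simp
  moreover have "Re (?a - ?b) = 0" using im[of "\<i>"] g e[of "\<i>"] by simp
  moreover have "Re (?a + ?b) = 0" using nonneg_quadratic_linear_zero[OF r1 g(2)] .
  moreover have "Im (?a - ?b) = 0" using nonneg_quadratic_linear_zero[OF r2 g(2)] by simp
  ultimately show ?thesis by (simp add: complex_eq_iff)
qed

lemma sform_axis_left: "sform M (axis i 1) y = (\<Sum>j\<in>UNIV. M$i$j * y$j)"
proof -
  have "sform M (axis i 1) y = (\<Sum>k\<in>UNIV. if k = i then (\<Sum>j\<in>UNIV. M$k$j * y$j) else 0)"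
    unfolding sform_def axis_def by (rule sum.cong) auto
  then show ?thesis by simp
qed

lemma sform_axis_right: "sform M x (axis j 1) = (\<Sum>i\<in>UNIV. cnj (x$i) * M$i$j)"
proof -
  have "sform M x (axis j 1) = (\<Sum>i\<in>UNIV. \<Sum>k\<in>UNIV. if k = j then cnj (x$i) * M$i$k else 0)"
    unfolding sform_def axis_def by (intro sum.cong) auto
  then show ?thesis by simp
qed

lemma sform_axis: "sform M (axis i 1) (axis j 1) = M$i$j"
  unfolding sform_axis_left by (simp add: axis_def if_distrib[of "\<lambda>x. _ * x"] cong: if_cong)

lemma qform_axis: "qform M (axis i 1) = M$i$i"
  using sform_axis[of M i i] by (simp add: sform_def qform_def)

lemma psd_diag: assumes "psd M" shows "M$i$i \<in> \<real>" "0 \<le> Re (M$i$i)"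
  using assms qform_axis[of M i] unfolding psd_qform by metis+

lemma psd_hermitian: assumes "psd M" shows "M$j$k = cnj (M$k$j)"
proof -
  have P: "\<And>z. Im (qform M z) = 0" using assms psd_qform complex_is_Real_iff by blast
  have e: "\<And>c. qform M (axis j 1 + c *s axis k 1)
                = M$j$j + c * M$j$k + cnj c * M$k$j + cnj c * c * M$k$k"
    by (simp add: qform_expand sform_axis qform_axis)
  have d: "Im (M$j$j) = 0" "Im (M$k$k) = 0" using psd_diag[OF assms] complex_is_Real_iff by blast+
  have "Im (M$j$k) + Im (M$k$j) = 0" using P[of "axis j 1 + 1 *s axis k 1"] e[of 1] d by simp
  moreover have "Re (M$j$k) - Re (M$k$j) = 0" using P[of "axis j 1 + \<i> *s axis k 1"] e[of "\<i>"] d by simp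
  ultimately show ?thesis by (simp add: complex_eq_iff)
qed

lemma psd_diag_zero:
  assumes "psd M" "\<And>i. M$i$i = 0" shows "M = 0"
proof -
  have "\<And>i j. M$i$j = 0"
    using psd_isotropic[OF assms(1), of "axis i 1" "axis j 1" for i j] assms(2)
    by (simp add: qform_axis sform_axis)
  then show ?thesis by (simp add: vec_eq_iff)
qed

text \<open>A psd matrix that is a proper convex combination of two psd matrices shares their
  isotropic vectors: the kernel of a point of a face is contained in the kernels of the face.\<close>
lemma psd_convex_isotropic:
  assumes "psd D1" "psd D2" "0 \<le> u" "u < 1" "qform ((1 - u) *\<^sub>R D1 + u *\<^sub>R D2) x = 0"
  shows "qform D1 x = 0"
proof -
  have q1: "Im (qform D1 x) = 0" "0 \<le> Re (qform D1 x)" and q2: "0 \<le> Re (qform D2 x)"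
    using assms(1,2) complex_is_Real_iff by (auto simp: psd_qform)
  have "(1 - u) * Re (qform D1 x) + u * Re (qform D2 x) = 0"
    using arg_cong[OF assms(5), of Re] by (simp add: qform_scaleR_comb)
  moreover have "0 \<le> u * Re (qform D2 x)" using q2 assms(3) by simp
  ultimately have "(1 - u) * Re (qform D1 x) \<le> 0" by linarith
  then have "Re (qform D1 x) = 0" using q1(2) assms(4) by (simp add: mult_le_0_iff)
  then show ?thesis using q1(1) by (simp add: complex_eq_iff)
qed

section \<open>Psd matrices of rank at most k are sums of k rank-one matrices\<close>

definition outer :: "complex^'m \<Rightarrow> complex^'m^'m" where
  "outer w = (\<chi> i k. w$i * cnj (w$k))"

definition schur_compl :: "complex^'m^'m \<Rightarrow> 'm \<Rightarrow> complex^'m^'m" where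
  "schur_compl M j = M - (\<chi> i k. M$i$j * M$j$k / M$j$j)"

lemma psd_schur_compl:
  assumes "psd M" "M$j$j \<noteq> 0" shows "psd (schur_compl M j)"
proof -
  define d where "d = M$j$j"
  have dr: "cnj d = d" using psd_diag[OF assms(1), of j] d_def Reals_cnj_iff by blast
  have "qform (schur_compl M j) x = qform M (x + (- sform M (axis j 1) x / d) *s axis j 1)" for x
  proof -
    define m where "m = sform M (axis j 1) x"
    define A where "A = sform M x (axis j 1)"
    have "qform (schur_compl M j) x = qform M x - A * m / d"
      unfolding schur_compl_def qform_def A_def m_def d_def sform_axis_left sform_axis_right
      by (simp add: algebra_simps sum_subtractf sum_divide_distrib sum_distrib_left sum_distrib_right)
    also have "\<dots> = qform M (x + (- m / d) *s axis j 1)"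
      unfolding qform_expand using assms(2) dr
      by (simp add: qform_axis A_def[symmetric] m_def[symmetric] d_def[symmetric] field_simps)
    finally show ?thesis by (simp add: m_def)
  qed
  then show ?thesis using assms(1) by (simp add: psd_qform)
qed

lemma span_coordinate_zero:
  assumes "\<And>v. v \<in> S \<Longrightarrow> v$j = (0::'a::field)" "v \<in> vec.span S"
  shows "v$j = 0"
proof -
  have "vec.span S \<subseteq> {v. v$j = 0}"
    by (rule vec.span_minimal) (use assms in \<open>auto simp: vec.subspace_def\<close>)
  then show ?thesis using assms(2) by auto
qed

text \<open>Taking the Schur complement strictly lowers the rank: row j of M is not in the row span
  of the complement, whose j-th column vanishes.\<close>
lemma rank_schur_compl:
  fixes M :: "complex^'m^'m"
  assumes "M$j$j \<noteq> 0" shows "rank (schur_compl M j) < rank M"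
proof -
  have sub: "rows (schur_compl M j) \<subseteq> vec.span (rows M)"
  proof
    fix v assume "v \<in> rows (schur_compl M j)"
    then obtain i where v: "v = row i (schur_compl M j)" by (auto simp: rows_def)
    have "v = row i M - (M$i$j / M$j$j) *s row j M"
      by (simp add: v row_def schur_compl_def vec_eq_iff)
    moreover have "row i M \<in> rows M" "row j M \<in> rows M" by (auto simp: rows_def)
    ultimately show "v \<in> vec.span (rows M)"
      by (simp add: vec.span_diff vec.span_scale vec.span_base)
  qed
  have col_zero: "v$j = 0" if "v \<in> vec.span (rows (schur_compl M j))" for v
    by (rule span_coordinate_zero[OF _ that]) (use assms in \<open>auto simp: rows_def row_def schur_compl_def\<close>)
  have "row j M \<notin> vec.span (rows (schur_compl M j))"
    using col_zero[of "row j M"] assms by (auto simp: row_def)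
  moreover have "row j M \<in> vec.span (rows M)" by (rule vec.span_base) (auto simp: rows_def)
  moreover have "vec.span (rows (schur_compl M j)) \<subseteq> vec.span (rows M)"
    using sub vec.span_mono vec.span_span by metis
  ultimately have "vec.span (rows (schur_compl M j)) \<subset> vec.span (rows M)" by blast
  then show ?thesis unfolding row_rank_def_gen by (rule vec.dim_psubset)
qed

lemma schur_compl_outer:
  assumes "psd M" "M$j$j \<noteq> 0"
  shows "M = schur_compl M j + outer ((\<chi> i. M$i$j / complex_of_real (sqrt (Re (M$j$j)))))"
proof -
  define d where "d = M$j$j"
  have dr: "d = complex_of_real (Re d)" using psd_diag[OF assms(1), of j] d_def
    by (simp add: complex_eq_iff complex_is_Real_iff)
  have dp: "Re d > 0" using psd_diag[OF assms(1), of j] assms(2) d_def dr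
    by (metis less_eq_real_def of_real_0)
  define q where "q = complex_of_real (sqrt (Re d))"
  have "sqrt (Re d) * sqrt (Re d) = Re d" using dp by simp
  then have qq: "q * q = d" unfolding q_def by (metis dr of_real_mult)
  have e: "M$i$j * M$j$k / d = M$i$j / q * cnj (M$k$j / q)" for i k
  proof -
    have "cnj (M$k$j / q) = M$j$k / q" using psd_hermitian[OF assms(1), of j k] by (simp add: q_def)
    then show ?thesis by (simp add: qq[symmetric])
  qed
  show ?thesis
    unfolding schur_compl_def outer_def d_def[symmetric] q_def[symmetric]
    by (simp add: vec_eq_iff e)
qed

lemma rank_zero_mat: assumes "rank (M::'a::field^'m^'m) = 0" shows "M = 0"
proof -
  have r: "rows M \<subseteq> {0}" using assms unfolding row_rank_def_gen vec.dim_eq_0 .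
  have "row i M = 0" for i using r by (auto simp: rows_def)
  then show ?thesis by (simp add: vec_eq_iff row_def)
qed

text \<open>Induction on the index set T: peel off one rank-one term by a Schur complement.\<close>
lemma psd_sum_of_outer:
  fixes T :: "'b set"
  assumes "finite T"
  shows "psd (M::complex^'m^'m) \<Longrightarrow> rank M \<le> card T \<Longrightarrow> \<exists>w. M = (\<Sum>t\<in>T. outer (w t))"
  using assms
proof (induction T arbitrary: M rule: finite_induct)
  case empty
  then show ?case using rank_zero_mat by auto
next
  case (insert x T M)
  show ?case
  proof (cases "\<forall>i. M$i$i = 0")
    case True
    then have "M = 0" using psd_diag_zero[OF insert(4)] by blast
    then show ?thesis by (intro exI[of _ "\<lambda>_. 0"]) (simp add: outer_def vec_eq_iff)
  next
    case False
    then obtain j where j: "M$j$j \<noteq> 0" by blast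
    have "rank (schur_compl M j) \<le> card T"
      using rank_schur_compl[OF j] insert(1,2,5) by simp
    then obtain w where w: "schur_compl M j = (\<Sum>t\<in>T. outer (w t))"
      using insert.IH[OF psd_schur_compl[OF insert(4) j]] by blast
    define u where "u = (\<chi> i. M$i$j / complex_of_real (sqrt (Re (M$j$j))))"
    have "(\<Sum>t\<in>T. outer ((w(x := u)) t)) = (\<Sum>t\<in>T. outer (w t))"
      by (intro sum.cong refl) (use insert(2) in auto)
    then have rest: "(\<Sum>t\<in>T. outer ((w(x := u)) t)) = schur_compl M j" by (simp only: w)
    have "M = outer u + schur_compl M j"
      using schur_compl_outer[OF insert(4) j] unfolding u_def by (simp only: add.commute)
    also have "\<dots> = (\<Sum>t\<in>insert x T. outer ((w(x := u)) t))"
      by (subst sum.insert[OF insert(1,2)]) (simp only: fun_upd_same rest)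
    finally show ?thesis by blast
  qed
qed

section \<open>Entries of marginal tracial and diagonal states\<close>

definition unit_mat :: "'n::finite \<Rightarrow> 'n \<Rightarrow> 'n cmat" where
  "unit_mat p q = (\<chi> i j. if i = p \<and> j = q then 1 else 0)"

lemma trace_kron:
  "trace (D ** kron A B) = (\<Sum>r\<in>UNIV. \<Sum>c\<in>UNIV. D$r$c * (A$fst c$fst r * B$snd c$snd r))"
  by (simp add: trace_def matrix_matrix_mult_def kron_def)

lemma sum_diag:
  fixes f :: "'n::finite \<times> 'n \<Rightarrow> 'a::comm_monoid_add"
  assumes "\<And>p q. p \<noteq> q \<Longrightarrow> f (p,q) = 0"
  shows "(\<Sum>r\<in>UNIV. f r) = (\<Sum>p\<in>UNIV. f (p,p))"
proof -
  have "(\<Sum>r\<in>UNIV. f r) = (\<Sum>r\<in>range (\<lambda>p. (p,p)). f r)"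
    by (rule sum.mono_neutral_right) (auto intro: assms)
  also have "\<dots> = (\<Sum>p\<in>UNIV. f (p,p))"
    by (subst sum.reindex) (auto simp: inj_on_def)
  finally show ?thesis .
qed

lemma trace_kron_unit: "trace (D ** kron (unit_mat p p) (unit_mat q q)) = D$(p,q)$(p,q)"
proof -
  have "trace (D ** kron (unit_mat p p) (unit_mat q q)) =
        (\<Sum>r\<in>UNIV. \<Sum>c\<in>UNIV. if c = (p,q) then (if r = (p,q) then D$r$c else 0) else 0)"
    unfolding trace_kron unit_mat_def by (intro sum.cong) auto
  then show ?thesis by simp
qed

lemma trace_kron_unit_id: "trace (D ** kron (unit_mat p p) (mat 1)) = (\<Sum>q\<in>UNIV. D$(p,q)$(p,q))"
proof -
  have "trace (D ** kron (unit_mat p p) (mat 1)) =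
        (\<Sum>r\<in>UNIV. \<Sum>c\<in>UNIV. if c = r then (if fst r = p then D$r$c else 0) else 0)"
    unfolding trace_kron unit_mat_def mat_def by (intro sum.cong) (auto simp: prod_eq_iff)
  also have "\<dots> = (\<Sum>r\<in>{p} \<times> UNIV. D$r$r)"
    by (simp, rule sum.mono_neutral_cong_right) auto
  also have "\<dots> = (\<Sum>r\<in>(\<lambda>q. (p,q)) ` UNIV. D$r$r)"
    by (rule sum.cong) auto
  also have "\<dots> = (\<Sum>q\<in>UNIV. D$(p,q)$(p,q))"
    by (subst sum.reindex) (auto simp: inj_on_def)
  finally show ?thesis .
qed

lemma ntr_unit_mat: "ntr (unit_mat p p :: 'n::finite cmat) = 1 / of_nat CARD('n)"
  by (simp add: ntr_def trace_def unit_mat_def)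

lemma Gamma_block_trace:
  assumes "D \<in> (Gamma :: 'n::finite tmat set)"
  shows "(\<Sum>q\<in>UNIV. D$(p,q)$(p,q)) = 1 / of_nat CARD('n)"
proof -
  have "state_of D (kron (unit_mat p p) (mat 1)) = ntr (unit_mat p p)"
    using assms by (simp add: Gamma_def)
  then show ?thesis by (simp add: state_of_def trace_kron_unit_id ntr_unit_mat)
qed

lemma ntr_schur_unit:
  fixes C :: "'n::finite cmat"
  shows "ntr (schur C (unit_mat p p) ** transpose (unit_mat q q))
         = (if p = q then C$p$p else 0) / of_nat CARD('n::finite)"
proof -
  have "schur C (unit_mat p p) ** transpose (unit_mat q q)
        = (\<chi> i j. if i = p \<and> j = q \<and> p = q then C$p$p else 0)"
    unfolding schur_def unit_mat_def transpose_def matrix_matrix_mult_def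
    by (auto simp: vec_eq_iff if_distrib[of "\<lambda>x. x * _"] if_distrib[of "\<lambda>x. _ * x"] cong: if_cong)
  then show ?thesis by (simp add: ntr_def trace_def)
qed

text \<open>A diagonal state gives weight 1/n to each e_p \<otimes> e_p and none to e_p \<otimes> e_q, p \<noteq> q:
  the Schur multiplier C of a unital diagonal map has unit diagonal.\<close>
lemma diagonal_state_entries:
  assumes "D \<in> (diagonal_states :: 'n::finite tmat set)"
  shows "D$(p,q)$(p,q) = (if p = q then 1 / of_nat CARD('n) else 0)"
proof -
  obtain C where C: "schur C \<in> UCPT" "represents_pi D (schur C)"
    using assms by (auto simp: diagonal_states_def diagonal_map_def)
  have "C$r$r = 1" for r
  proof -
    have "C$r$r = schur C (mat 1) $ r $ r" by (simp add: schur_def mat_def)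
    also have "\<dots> = 1" using C(1) by (simp add: UCPT_def mat_def)
    finally show ?thesis .
  qed
  moreover have "state_of D (kron (unit_mat p p) (unit_mat q q))
                 = ntr (schur C (unit_mat p p) ** transpose (unit_mat q q))"
    using C(2) by (simp add: represents_pi_def)
  then have "D$(p,q)$(p,q) = (if p = q then C$p$p else 0) / of_nat CARD('n)"
    unfolding state_of_def trace_kron_unit ntr_schur_unit .
  ultimately show ?thesis by simp
qed

section \<open>Gram states\<close>

definition gram :: "complex^'n^'n \<Rightarrow> 'n \<Rightarrow> 'n \<Rightarrow> complex" where
  "gram U p r = (\<Sum>t\<in>UNIV. cnj (U$p$t) * U$r$t)"

definition gram_state :: "complex^'n^'n \<Rightarrow> 'n::finite tmat" where
  "gram_state U = (\<chi> r c. if fst r = snd r \<and> fst c = snd c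
                            then gram U (fst r) (fst c) / of_nat CARD('n) else 0)"

lemma gram_state_off1: "fst r \<noteq> snd r \<Longrightarrow> gram_state U $ r $ c = 0"
  by (simp add: gram_state_def)

lemma gram_state_off2: "fst c \<noteq> snd c \<Longrightarrow> gram_state U $ r $ c = 0"
  by (simp add: gram_state_def)

lemma gram_state_diag:
  fixes U :: "complex^'n::finite^'n"
  shows "gram_state U $ (p,p) $ (s,s) = gram U p s / of_nat CARD('n)"
  by (simp add: gram_state_def)

lemma gram_state_eqI:
  fixes D :: "'n::finite tmat"
  assumes "\<And>r c. fst r \<noteq> snd r \<or> fst c \<noteq> snd c \<Longrightarrow> D$r$c = 0"
    and "\<And>p q. D$(p,p)$(q,q) = gram U p q / of_nat CARD('n)"
  shows "D = gram_state U"
  unfolding vec_eq_iff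
proof (intro allI)
  fix r c :: "'n \<times> 'n"
  show "D$r$c = gram_state U $ r $ c"
  proof (cases "fst r = snd r \<and> fst c = snd c")
    case True
    then obtain p q where "r = (p,p)" "c = (q,q)" by (metis prod.collapse)
    then show ?thesis by (simp add: assms(2) gram_state_diag)
  next
    case False
    then show ?thesis using assms(1) gram_state_off1 gram_state_off2 by metis
  qed
qed

lemma cnj_mult_self: "cnj z * z = complex_of_real ((cmod z)^2)"
  by (metis complex_norm_square mult.commute)

lemma sum_cnj_real: "(\<Sum>t\<in>S. cnj (z t) * z t) = complex_of_real (\<Sum>t\<in>S. (cmod (z t))^2)"
  unfolding cnj_mult_self of_real_sum ..

lemma sum_cnj_norm: "(\<Sum>t\<in>UNIV. cnj (x$t) * x$t) = complex_of_real ((norm x)^2)"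
proof -
  have "(norm x)^2 = (\<Sum>t\<in>UNIV. (cmod (x$t))^2)"
    unfolding norm_vec_def L2_set_def by (simp add: sum_nonneg)
  then show ?thesis unfolding sum_cnj_real by simp
qed

lemma gram_unit: "norm (U$p) = 1 \<Longrightarrow> gram U p p = 1"
  unfolding gram_def using sum_cnj_norm[of "U$p"] by simp

text \<open>The quadratic form of a Gram state is (1/n) |V x|^2 with V x = \<Sum>_p x_pp U_p, so Gram
  states are psd and their isotropic vectors are described by the kernel of V.\<close>
lemma qform_gram_state:
  fixes U :: "complex^'n::finite^'n"
  shows "qform (gram_state U) x = (\<Sum>t\<in>UNIV. cnj (\<Sum>p\<in>UNIV. U$p$t * x$(p,p)) * (\<Sum>r\<in>UNIV. U$r$t * x$(r,r)))
                                  / of_nat CARD('n)"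
proof -
  have "qform (gram_state U) x = (\<Sum>p\<in>UNIV. \<Sum>s\<in>UNIV. cnj (x$(p,p)) * gram_state U $ (p,p) $ (s,s) * x$(s,s))"
    unfolding qform_def
    by (subst sum_diag) (auto simp: gram_state_off1 gram_state_off2 intro!: sum.neutral sum.cong sum_diag)
  also have "\<dots> = (\<Sum>p\<in>UNIV. \<Sum>s\<in>UNIV. \<Sum>t\<in>UNIV. cnj (U$p$t * x$(p,p)) * (U$s$t * x$(s,s))) / of_nat CARD('n)"
    unfolding gram_state_diag gram_def
    by (simp add: sum_divide_distrib sum_distrib_left sum_distrib_right algebra_simps)
  also have "\<dots> = (\<Sum>t\<in>UNIV. cnj (\<Sum>p\<in>UNIV. U$p$t * x$(p,p)) * (\<Sum>r\<in>UNIV. U$r$t * x$(r,r))) / of_nat CARD('n)"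
  proof -
    have "(\<Sum>t\<in>UNIV. cnj (\<Sum>p\<in>UNIV. U$p$t * x$(p,p)) * (\<Sum>r\<in>UNIV. U$r$t * x$(r,r)))
        = (\<Sum>t\<in>UNIV. \<Sum>p\<in>UNIV. \<Sum>s\<in>UNIV. cnj (U$p$t * x$(p,p)) * (U$s$t * x$(s,s)))"
      by (simp only: cnj_sum sum_distrib_left sum_distrib_right) (rule sum.cong[OF refl], rule sum.swap)
    also have "\<dots> = (\<Sum>p\<in>UNIV. \<Sum>t\<in>UNIV. \<Sum>s\<in>UNIV. cnj (U$p$t * x$(p,p)) * (U$s$t * x$(s,s)))"
      by (rule sum.swap)
    also have "\<dots> = (\<Sum>p\<in>UNIV. \<Sum>s\<in>UNIV. \<Sum>t\<in>UNIV. cnj (U$p$t * x$(p,p)) * (U$s$t * x$(s,s)))"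
      by (rule sum.cong[OF refl], rule sum.swap)
    finally show ?thesis by simp
  qed
  finally show ?thesis .
qed

lemma psd_gram_state:
  fixes U :: "complex^'n::finite^'n"
  shows "psd (gram_state U)"
proof -
  have "qform (gram_state U) x \<in> \<real> \<and> 0 \<le> Re (qform (gram_state U) x)" for x
  proof -
    define z where "z t = (\<Sum>p\<in>UNIV. U$p$t * x$(p,p))" for t
    have "qform (gram_state U) x = complex_of_real ((\<Sum>t\<in>UNIV. (cmod (z t))^2) / real CARD('n))"
      unfolding qform_gram_state z_def[symmetric] sum_cnj_real by simp
    then show ?thesis by (simp add: sum_nonneg)
  qed
  then show ?thesis by (simp add: psd_qform)
qed

lemma trace_gram_state:
  fixes U :: "complex^'n::finite^'n"
  assumes "\<And>p. norm (U$p) = 1"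
  shows "trace (gram_state U) = 1"
proof -
  have "trace (gram_state U) = (\<Sum>p\<in>UNIV. gram_state U $ (p,p) $ (p,p))"
    unfolding trace_def by (rule sum_diag) (simp add: gram_state_off1)
  also have "\<dots> = (\<Sum>p::'n\<in>UNIV. 1 / of_nat CARD('n))" by (simp add: gram_state_diag gram_unit assms)
  finally show ?thesis by simp
qed

lemma state_gram_state:
  fixes U :: "complex^'n::finite^'n"
  shows "state_of (gram_state U) (kron A B)
         = (\<Sum>p\<in>UNIV. \<Sum>s\<in>UNIV. gram U p s * (A$s$p * B$s$p)) / of_nat CARD('n)"
proof -
  have "state_of (gram_state U) (kron A B)
        = (\<Sum>r\<in>UNIV. \<Sum>c\<in>UNIV. gram_state U $ r $ c * (A $ fst c $ fst r * B $ snd c $ snd r))"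
    by (simp add: state_of_def trace_kron)
  also have "\<dots> = (\<Sum>r\<in>UNIV. \<Sum>s\<in>UNIV. gram_state U $ r $ (s,s) * (A $ s $ fst r * B $ s $ snd r))"
    by (intro sum.cong refl, subst sum_diag) (auto simp: gram_state_off2)
  also have "\<dots> = (\<Sum>p\<in>UNIV. \<Sum>s\<in>UNIV. gram_state U $ (p,p) $ (s,s) * (A $ s $ p * B $ s $ p))"
    by (subst sum_diag) (auto simp: gram_state_off1)
  finally show ?thesis by (simp add: gram_state_diag sum_divide_distrib)
qed

lemma gram_state_marginals:
  fixes U :: "complex^'n::finite^'n"
  assumes "\<And>p. norm (U$p) = 1"
  shows "state_of (gram_state U) (kron A (mat 1)) = ntr A"
    and "state_of (gram_state U) (kron (mat 1) B) = ntr B"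
  unfolding state_gram_state
  by (simp_all add: mat_def if_distrib[of "\<lambda>x. _ * x"] if_distrib[of "\<lambda>x. x * _"] gram_unit assms
      ntr_def trace_def cong: if_cong)

definition gram_mult :: "complex^'n^'n \<Rightarrow> complex^'n^'n" where
  "gram_mult U = (\<chi> s p. gram U p s)"

lemma pi_gram_state:
  fixes U :: "complex^'n::finite^'n"
  shows "represents_pi (gram_state U) (schur (gram_mult U))"
  unfolding represents_pi_def
proof (intro allI)
  fix A B :: "'n cmat"
  have "ntr (schur (gram_mult U) A ** transpose B) = (\<Sum>s\<in>UNIV. \<Sum>p\<in>UNIV. gram U p s * (A$s$p * B$s$p)) / of_nat CARD('n)"
    by (simp add: ntr_def trace_def matrix_matrix_mult_def schur_def transpose_def gram_mult_def algebra_simps)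
  also have "\<dots> = (\<Sum>p\<in>UNIV. \<Sum>s\<in>UNIV. gram U p s * (A$s$p * B$s$p)) / of_nat CARD('n)"
    by (subst sum.swap) simp
  finally show "state_of (gram_state U) (kron A B) = ntr (schur (gram_mult U) A ** transpose B)"
    unfolding state_gram_state by simp
qed

lemma sum5_swap:
  fixes f :: "nat \<Rightarrow> nat \<Rightarrow> 'n::finite \<Rightarrow> 'n \<Rightarrow> 't::finite \<Rightarrow> complex"
  shows "(\<Sum>i<k. \<Sum>j<k. \<Sum>p\<in>UNIV. \<Sum>q\<in>UNIV. \<Sum>t\<in>UNIV. f i j p q t)
       = (\<Sum>t\<in>UNIV. \<Sum>i<k. \<Sum>j<k. \<Sum>p\<in>UNIV. \<Sum>q\<in>UNIV. f i j p q t)"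
proof -
  have "(\<Sum>i<k. \<Sum>j<k. \<Sum>p\<in>UNIV. \<Sum>q\<in>UNIV. \<Sum>t\<in>UNIV. f i j p q t)
      = (\<Sum>i<k. \<Sum>j<k. \<Sum>p\<in>UNIV. \<Sum>t\<in>UNIV. \<Sum>q\<in>UNIV. f i j p q t)"
    by (intro sum.cong refl, rule sum.swap)
  also have "\<dots> = (\<Sum>i<k. \<Sum>j<k. \<Sum>t\<in>UNIV. \<Sum>p\<in>UNIV. \<Sum>q\<in>UNIV. f i j p q t)"
    by (intro sum.cong refl, rule sum.swap)
  also have "\<dots> = (\<Sum>i<k. \<Sum>t\<in>UNIV. \<Sum>j<k. \<Sum>p\<in>UNIV. \<Sum>q\<in>UNIV. f i j p q t)"
    by (intro sum.cong refl, rule sum.swap)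
  also have "\<dots> = (\<Sum>t\<in>UNIV. \<Sum>i<k. \<Sum>j<k. \<Sum>p\<in>UNIV. \<Sum>q\<in>UNIV. f i j p q t)"
    by (rule sum.swap)
  finally show ?thesis .
qed

definition block_form :: "nat \<Rightarrow> (nat \<Rightarrow> nat \<Rightarrow> 'n::finite cmat) \<Rightarrow> (nat \<Rightarrow> complex^'n) \<Rightarrow> complex" where
  "block_form k A v = (\<Sum>i<k. \<Sum>j<k. \<Sum>p\<in>UNIV. \<Sum>q\<in>UNIV. cnj (v i $ p) * A i j $ p $ q * v j $ q)"

lemma psd_block_form: "psd_block k A \<longleftrightarrow> (\<forall>v. block_form k A v \<in> \<real> \<and> 0 \<le> Re (block_form k A v))"
  by (simp add: psd_block_def block_form_def Let_def)

text \<open>Schur multiplication by a Gram matrix is completely positive: its block form at v is the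
  sum over t of the block forms of the input at the vectors (v_i,p conj U_pt)_p.\<close>
lemma cp_gram_mult:
  fixes U :: "complex^'n::finite^'n"
  shows "completely_positive (schur (gram_mult U))"
  unfolding completely_positive_def psd_block_form
proof (intro allI impI)
  fix k and A :: "nat \<Rightarrow> nat \<Rightarrow> 'n cmat" and v :: "nat \<Rightarrow> complex^'n"
  assume A: "\<forall>v. block_form k A v \<in> \<real> \<and> 0 \<le> Re (block_form k A v)"
  define w where "w t i = (\<chi> p. v i $ p * cnj (U$p$t))" for t i
  have "block_form k (\<lambda>i j. schur (gram_mult U) (A i j)) v
        = (\<Sum>i<k. \<Sum>j<k. \<Sum>p\<in>UNIV. \<Sum>q\<in>UNIV. \<Sum>t\<in>UNIV. cnj (w t i $ p) * A i j $ p $ q * w t j $ q)"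
    unfolding block_form_def schur_def gram_mult_def gram_def w_def
    by (simp add: sum_distrib_left sum_distrib_right algebra_simps)
  also have "\<dots> = (\<Sum>t\<in>UNIV. block_form k A (w t))"
    unfolding block_form_def by (rule sum5_swap)
  finally show "block_form k (\<lambda>i j. schur (gram_mult U) (A i j)) v \<in> \<real> \<and>
                0 \<le> Re (block_form k (\<lambda>i j. schur (gram_mult U) (A i j)) v)"
    using A by (auto intro: sum_nonneg)
qed

lemma UCPT_gram_mult:
  fixes U :: "complex^'n::finite^'n"
  assumes "\<And>p. norm (U$p) = 1"
  shows "schur (gram_mult U) \<in> UCPT"
  unfolding UCPT_def
proof (intro CollectI conjI allI)
  show "schur (gram_mult U) (A + B) = schur (gram_mult U) A + schur (gram_mult U) B" for A B
    by (simp add: schur_def vec_eq_iff algebra_simps)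
  show "schur (gram_mult U) (c *s A) = c *s schur (gram_mult U) A" for c A
    by (simp add: schur_def vec_eq_iff algebra_simps)
  show "completely_positive (schur (gram_mult U))" by (rule cp_gram_mult)
  show "schur (gram_mult U) (mat 1) = mat 1"
    by (simp add: schur_def vec_eq_iff gram_mult_def mat_def gram_unit assms)
  show "ntr (schur (gram_mult U) A) = ntr A" for A
    by (simp add: schur_def ntr_def trace_def gram_mult_def gram_unit assms)
qed

lemma gram_state_diagonal:
  fixes U :: "complex^'n::finite^'n"
  assumes "\<And>p. norm (U$p) = 1"
  shows "gram_state U \<in> Gamma" "gram_state U \<in> diagonal_states"
proof -
  show G: "gram_state U \<in> Gamma"
    unfolding Gamma_def density_def
    using psd_gram_state trace_gram_state[OF assms] gram_state_marginals[OF assms] by blast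
  show "gram_state U \<in> diagonal_states"
    unfolding diagonal_states_def using G UCPT_gram_mult[OF assms] pi_gram_state
    by (auto simp: diagonal_map_def)
qed

section \<open>Gram states of spanning frames are extreme and have rank |T|\<close>

definition supported_on :: "'n set \<Rightarrow> complex^'n \<Rightarrow> bool" where
  "supported_on T x \<longleftrightarrow> (\<forall>t. t \<notin> T \<longrightarrow> x$t = 0)"

definition outer_vec :: "complex^'n \<Rightarrow> complex^('n \<times> 'n)" where
  "outer_vec x = (\<chi> z. x$(fst z) * cnj (x$(snd z)))"

definition block_basis :: "'n::finite set \<Rightarrow> (complex^('n \<times> 'n)) set" where
  "block_basis T = (\<lambda>z. axis z 1) ` (T \<times> T)"

lemma span_range_repr:
  fixes f :: "'i::finite \<Rightarrow> 'a::field^'m"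
  assumes "x \<in> vec.span (range f)"
  shows "\<exists>c. x = (\<Sum>j\<in>UNIV. c j *s f j)"
proof -
  let ?S = "{x. \<exists>c. x = (\<Sum>j\<in>UNIV. c j *s f j)}"
  have "vec.span (range f) \<subseteq> ?S"
  proof (rule vec.span_minimal)
    show "range f \<subseteq> ?S"
    proof clarify
      fix i
      have "f i = (\<Sum>j\<in>UNIV. (if j = i then 1 else 0) *s f j)"
        by (simp add: if_distrib[of "\<lambda>a. a *s _"] cong: if_cong)
      then show "\<exists>c. f i = (\<Sum>j\<in>UNIV. c j *s f j)" by (rule exI[where x="\<lambda>j. if j = i then 1 else 0"])
    qed
    show "vec.subspace ?S"
      unfolding vec.subspace_def
    proof (intro conjI ballI allI)
      show "0 \<in> ?S" by (intro CollectI exI[of _ "\<lambda>_. 0"]) simp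
      fix x y assume "x \<in> ?S" "y \<in> ?S"
      then obtain c1 c2 where "x = (\<Sum>j\<in>UNIV. c1 j *s f j)" "y = (\<Sum>j\<in>UNIV. c2 j *s f j)" by blast
      then have "x + y = (\<Sum>j\<in>UNIV. (c1 j + c2 j) *s f j)"
        by (simp add: vec.scale_left_distrib sum.distrib)
      then show "x + y \<in> ?S" by (intro CollectI exI[where x="\<lambda>j. c1 j + c2 j"])
    next
      fix a x assume "x \<in> ?S"
      then obtain c where "x = (\<Sum>j\<in>UNIV. c j *s f j)" by blast
      then have "a *s x = (\<Sum>j\<in>UNIV. (a * c j) *s f j)" by (simp add: vec.scale_sum_right)
      then show "a *s x \<in> ?S" by (intro CollectI exI[where x="\<lambda>j. a * c j"])
    qed
  qed
  then show ?thesis using assms by blast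
qed

definition diag_lift :: "complex^'n \<Rightarrow> complex^('n \<times> 'n)" where
  "diag_lift x = (\<chi> z. if fst z = snd z then x$(fst z) else 0)"

lemma sform_diag_lift:
  fixes M :: "complex^('n::finite \<times> 'n)^('n \<times> 'n)"
  shows "sform M (diag_lift x) (diag_lift y) = (\<Sum>p\<in>UNIV. \<Sum>r\<in>UNIV. cnj (x$p) * M$(p,p)$(r,r) * y$r)"
proof -
  have "sform M (diag_lift x) (diag_lift y)
        = (\<Sum>a\<in>UNIV. \<Sum>r\<in>UNIV. cnj (diag_lift x $ a) * M$a$(r,r) * y$r)"
    unfolding sform_def by (intro sum.cong refl, subst sum_diag) (auto simp: diag_lift_def)
  also have "\<dots> = (\<Sum>p\<in>UNIV. \<Sum>r\<in>UNIV. cnj (x$p) * M$(p,p)$(r,r) * y$r)"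
    by (subst sum_diag) (auto simp: diag_lift_def)
  finally show ?thesis .
qed

lemma isotropic_face_block:
  fixes U :: "complex^'n::finite^'n"
  assumes D1: "D1 \<in> Gamma" and iso: "\<And>x. qform (gram_state U) x = 0 \<Longrightarrow> qform D1 x = 0"
  shows "\<And>r c. fst r \<noteq> snd r \<or> fst c \<noteq> snd c \<Longrightarrow> D1$r$c = 0"
    and "\<And>p. D1$(p,p)$(p,p) = 1 / of_nat CARD('n)"
proof -
  have p1: "psd D1" using D1 by (simp add: Gamma_def density_def)
  have off: "D1$r$c = 0 \<and> D1$c$r = 0" if "fst r \<noteq> snd r" for r c
  proof -
    have "qform D1 (axis r 1) = 0" using that by (intro iso) (simp add: qform_axis gram_state_off1)
    from psd_isotropic[OF p1 this, of "axis c 1"] show ?thesis by (simp add: sform_axis)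
  qed
  then show "\<And>r c. fst r \<noteq> snd r \<or> fst c \<noteq> snd c \<Longrightarrow> D1$r$c = 0" by blast
  fix p
  have "(\<Sum>q\<in>UNIV. D1$(p,q)$(p,q)) = (\<Sum>q\<in>UNIV. if q = p then D1$(p,p)$(p,p) else 0)"
    by (rule sum.cong) (use off in auto)
  then show "D1$(p,p)$(p,p) = 1 / of_nat CARD('n)" using Gamma_block_trace[OF D1, of p] by simp
qed

lemma sum4_swap:
  "(\<Sum>i\<in>A. \<Sum>j\<in>B. \<Sum>s\<in>C. \<Sum>t\<in>D. f i j s t) = (\<Sum>s\<in>C. \<Sum>t\<in>D. \<Sum>i\<in>A. \<Sum>j\<in>B. f i j s t)"
proof -
  have "(\<Sum>i\<in>A. \<Sum>j\<in>B. \<Sum>s\<in>C. \<Sum>t\<in>D. f i j s t) = (\<Sum>i\<in>A. \<Sum>s\<in>C. \<Sum>j\<in>B. \<Sum>t\<in>D. f i j s t)"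
    by (intro sum.cong refl, rule sum.swap)
  also have "\<dots> = (\<Sum>s\<in>C. \<Sum>i\<in>A. \<Sum>j\<in>B. \<Sum>t\<in>D. f i j s t)" by (rule sum.swap)
  also have "\<dots> = (\<Sum>s\<in>C. \<Sum>i\<in>A. \<Sum>t\<in>D. \<Sum>j\<in>B. f i j s t)"
    by (intro sum.cong refl, rule sum.swap)
  also have "\<dots> = (\<Sum>s\<in>C. \<Sum>t\<in>D. \<Sum>i\<in>A. \<Sum>j\<in>B. f i j s t)"
    by (intro sum.cong refl, rule sum.swap)
  finally show ?thesis .
qed

locale spanning_frame =
  fixes U :: "complex^'n::finite^'n" and T :: "'n set"
  assumes unit: "\<And>p. norm (U$p) = 1"
    and supp: "\<And>p. supported_on T (U$p)"
    and spans: "block_basis T \<subseteq> vec.span (range (\<lambda>j. outer_vec (U$j)))"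
begin

lemma supp_zero: "t \<notin> T \<Longrightarrow> U$p$t = 0"
  using supp by (simp add: supported_on_def)

lemma left_inverse:
  obtains W :: "'n \<Rightarrow> 'n \<Rightarrow> complex"
  where "\<And>s t. s \<in> T \<Longrightarrow> t \<in> T \<Longrightarrow> (\<Sum>j\<in>UNIV. U$j$s * W j t) = (if s = t then 1 else 0)"
    and "\<And>j t. t \<notin> T \<Longrightarrow> W j t = 0"
proof -
  have "\<forall>t\<in>T. \<exists>c. axis (t,t) 1 = (\<Sum>j\<in>UNIV. c j *s outer_vec (U$j))"
    using spans span_range_repr by (auto simp: block_basis_def)
  then obtain cc where cc: "\<And>t. t \<in> T \<Longrightarrow> axis (t,t) 1 = (\<Sum>j\<in>UNIV. cc t j *s outer_vec (U$j))"
    by metis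
  define W where "W j t = (if t \<in> T then cc t j * cnj (U$j$t) else 0)" for j t
  have "(\<Sum>j\<in>UNIV. U$j$s * W j t) = (if s = t then 1 else 0)" if "s \<in> T" "t \<in> T" for s t
  proof -
    have "(axis (t,t) 1 :: complex^('n \<times> 'n)) $ (s,t) = (if s = t then 1 else 0)" by (simp add: axis_def)
    moreover have "(axis (t,t) 1 :: complex^('n \<times> 'n)) $ (s,t) = (\<Sum>j\<in>UNIV. U$j$s * W j t)"
      unfolding cc[OF that(2)] W_def using that by (simp add: outer_vec_def algebra_simps)
    ultimately show ?thesis by simp
  qed
  then show ?thesis by (intro that[of W]) (auto simp: W_def)
qed

lemma orthogonal_to_frame_zero:
  assumes orth: "\<And>p. (\<Sum>s\<in>UNIV. \<Sum>t\<in>UNIV. cnj (U$p$s) * N s t * U$p$t) = 0"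
    and Nsupp: "\<And>s t. s \<notin> T \<or> t \<notin> T \<Longrightarrow> N s t = 0"
  shows "N s t = 0"
proof (cases "s \<in> T \<and> t \<in> T")
  case True
  define \<Phi> where "\<Phi> M = (\<Sum>a\<in>UNIV. \<Sum>b\<in>UNIV. N a b * M$(b,a))" for M :: "complex^('n \<times> 'n)"
  have \<Phi>_lin: "\<Phi> (\<Sum>j\<in>UNIV. c j *s f j) = (\<Sum>j\<in>UNIV. c j * \<Phi> (f j))" for c f
  proof -
    have "\<Phi> (\<Sum>j\<in>UNIV. c j *s f j) = (\<Sum>a\<in>UNIV. \<Sum>b\<in>UNIV. \<Sum>j\<in>UNIV. c j * (N a b * f j $ (b,a)))"
      unfolding \<Phi>_def by (simp add: sum_distrib_left algebra_simps)
    also have "\<dots> = (\<Sum>j\<in>UNIV. \<Sum>a\<in>UNIV. \<Sum>b\<in>UNIV. c j * (N a b * f j $ (b,a)))"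
      by (subst sum.swap, rule sum.cong[OF refl], rule sum.swap)
    finally show ?thesis unfolding \<Phi>_def by (simp add: sum_distrib_left)
  qed
  have "\<Phi> (outer_vec (U$j)) = 0" for j
    using orth[of j] unfolding \<Phi>_def outer_vec_def by (simp add: algebra_simps)
  moreover have "axis (t,s) 1 \<in> vec.span (range (\<lambda>j. outer_vec (U$j)))"
    using spans True by (auto simp: block_basis_def)
  then obtain c where "axis (t,s) 1 = (\<Sum>j\<in>UNIV. c j *s outer_vec (U$j))"
    using span_range_repr by blast
  ultimately have "\<Phi> (axis (t,s) 1) = 0" by (simp add: \<Phi>_lin)
  moreover have "\<Phi> (axis (t,s) 1) = N s t"
  proof -
    have "\<Phi> (axis (t,s) 1) = (\<Sum>a\<in>UNIV. \<Sum>b\<in>UNIV. if b = t then (if a = s then N a b else 0) else 0)"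
      unfolding \<Phi>_def axis_def by (intro sum.cong refl) auto
    then show ?thesis by simp
  qed
  ultimately show ?thesis by simp
next
  case False
  then show ?thesis using Nsupp by blast
qed

lemma unit_vector_mod_kernel:
  obtains W :: "'n \<Rightarrow> 'n \<Rightarrow> complex"
  where "\<And>r s. (\<Sum>j\<in>UNIV. U$j$s * (axis r 1 - (\<chi> j. \<Sum>t\<in>UNIV. W j t * U$r$t))$j) = 0"
    and "\<And>j t. t \<notin> T \<Longrightarrow> W j t = 0"
proof -
  obtain W where W1: "\<And>s t. s \<in> T \<Longrightarrow> t \<in> T \<Longrightarrow> (\<Sum>j\<in>UNIV. U$j$s * W j t) = (if s = t then 1 else 0)"
    and W0: "\<And>j t. t \<notin> T \<Longrightarrow> W j t = 0"
    using left_inverse by blast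
  define z where "z r = (\<chi> j. \<Sum>t\<in>UNIV. W j t * U$r$t)" for r
  have "(\<Sum>j\<in>UNIV. U$j$s * z r $ j) = U$r$s" if s: "s \<in> T" for r s
  proof -
    have "(\<Sum>j\<in>UNIV. U$j$s * z r $ j) = (\<Sum>t\<in>UNIV. (\<Sum>j\<in>UNIV. U$j$s * W j t) * U$r$t)"
      unfolding z_def by (simp add: sum_distrib_left sum_distrib_right algebra_simps) (rule sum.swap)
    also have "\<dots> = (\<Sum>t\<in>UNIV. if t = s then U$r$t else 0)"
    proof (rule sum.cong[OF refl])
      fix t
      show "(\<Sum>j\<in>UNIV. U$j$s * W j t) * U$r$t = (if t = s then U$r$t else 0)"
        by (cases "t \<in> T") (use s W1 W0 supp_zero in auto)
    qed
    finally show ?thesis by simp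
  qed
  moreover have "(\<Sum>j\<in>UNIV. U$j$s * axis r 1 $ j) = U$r$s" for r s
    by (simp add: axis_def if_distrib[of "\<lambda>a. _ * a"] cong: if_cong)
  moreover have "(\<Sum>j\<in>UNIV. U$j$s * (axis r 1 - z r)$j)
                 = (\<Sum>j\<in>UNIV. U$j$s * axis r 1 $ j) - (\<Sum>j\<in>UNIV. U$j$s * z r $ j)" for r s
    by (simp add: right_diff_distrib sum_subtractf)
  ultimately have "(\<Sum>j\<in>UNIV. U$j$s * (axis r 1 - z r)$j) = 0" for r s
    by (cases "s \<in> T") (simp_all add: supp_zero)
  then show ?thesis using W0 unfolding z_def by (rule that)
qed

lemma kernel_factorization:
  fixes K :: "complex^'n^'n"
  assumes ker: "\<And>x y. (\<And>t. (\<Sum>r\<in>UNIV. U$r$t * x$r) = 0) \<Longrightarrow> sform K x y = 0 \<and> sform K y x = 0"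
  obtains N where "\<And>p r. K$p$r = (\<Sum>s\<in>UNIV. \<Sum>t\<in>UNIV. cnj (U$p$s) * N s t * U$r$t)"
    and "\<And>s t. s \<notin> T \<or> t \<notin> T \<Longrightarrow> N s t = 0"
proof -
  obtain W where Wker: "\<And>r s. (\<Sum>j\<in>UNIV. U$j$s * (axis r 1 - (\<chi> j. \<Sum>t\<in>UNIV. W j t * U$r$t))$j) = 0"
    and W0: "\<And>j t. t \<notin> T \<Longrightarrow> W j t = 0"
    using unit_vector_mod_kernel by blast
  define z where "z r = (\<chi> j. \<Sum>t\<in>UNIV. W j t * U$r$t)" for r
  define N where "N s t = (\<Sum>i\<in>UNIV. \<Sum>j\<in>UNIV. cnj (W i s) * K$i$j * W j t)" for s t
  have zker: "(\<Sum>j\<in>UNIV. U$j$s * (axis r 1 - z r)$j) = 0" for r s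
    unfolding z_def by (rule Wker)
  have Kz: "K$p$r = sform K (z p) (z r)" for p r
  proof -
    have "K$p$r = sform K (axis p 1) (axis r 1)" by (simp add: sform_axis)
    also have "\<dots> = sform K (axis p 1) (z r)"
      using ker[OF zker, of r "axis p 1"] by (simp add: sform_diff_right)
    also have "\<dots> = sform K (z p) (z r)"
      using ker[OF zker, of p "z r"] by (simp add: sform_diff_left)
    finally show ?thesis .
  qed
  moreover have "sform K (z p) (z r) = (\<Sum>s\<in>UNIV. \<Sum>t\<in>UNIV. cnj (U$p$s) * N s t * U$r$t)" for p r
  proof -
    have "sform K (z p) (z r) = (\<Sum>i\<in>UNIV. \<Sum>j\<in>UNIV. \<Sum>s\<in>UNIV. \<Sum>t\<in>UNIV.
            cnj (U$p$s) * (cnj (W i s) * K$i$j * W j t) * U$r$t)"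
      unfolding sform_def z_def by (simp add: sum_distrib_left sum_distrib_right algebra_simps)
    also have "\<dots> = (\<Sum>s\<in>UNIV. \<Sum>t\<in>UNIV. \<Sum>i\<in>UNIV. \<Sum>j\<in>UNIV.
            cnj (U$p$s) * (cnj (W i s) * K$i$j * W j t) * U$r$t)"
      by (rule sum4_swap)
    finally show ?thesis unfolding N_def by (simp add: sum_distrib_left sum_distrib_right)
  qed
  moreover have "N s t = 0" if "s \<notin> T \<or> t \<notin> T" for s t
    using that W0 unfolding N_def by auto
  ultimately show ?thesis using that[of N] by simp
qed

text \<open>The difference K of their compressions to the
  diagonal-index block vanishes on ker V, hence K = U N U^*, and K has zero diagonal.\<close>
lemma isotropic_face_eq:
  assumes D1: "D1 \<in> Gamma" and iso: "\<And>x. qform (gram_state U) x = 0 \<Longrightarrow> qform D1 x = 0"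
  shows "D1 = gram_state U"
proof -
  let ?F = "gram_state U"
  have p1: "psd D1" using D1 by (simp add: Gamma_def density_def)
  note block = isotropic_face_block[OF D1 iso]
  define K where "K = (\<chi> p r. D1$(p,p)$(r,r) - ?F$(p,p)$(r,r))"
  have K_diff: "sform K x y = sform D1 (diag_lift x) (diag_lift y) - sform ?F (diag_lift x) (diag_lift y)"
    for x y unfolding sform_diag_lift by (simp add: K_def sform_def algebra_simps sum_subtractf)
  have "sform K x y = 0 \<and> sform K y x = 0" if x: "\<And>t. (\<Sum>r\<in>UNIV. U$r$t * x$r) = 0" for x y
  proof -
    have "qform ?F (diag_lift x) = 0" using x by (simp add: qform_gram_state diag_lift_def)
    then show ?thesis unfolding K_diff
      using psd_isotropic[OF psd_gram_state] psd_isotropic[OF p1 iso] by simp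
  qed
  then obtain N where KN: "\<And>p r. K$p$r = (\<Sum>s\<in>UNIV. \<Sum>t\<in>UNIV. cnj (U$p$s) * N s t * U$r$t)"
    and Nsupp: "\<And>s t. s \<notin> T \<or> t \<notin> T \<Longrightarrow> N s t = 0"
    using kernel_factorization by blast
  have "K$p$p = 0" for p using block(2) by (simp add: K_def gram_state_diag gram_unit unit)
  then have "N s t = 0" for s t
    using orthogonal_to_frame_zero[of N, OF _ Nsupp] by (simp add: KN)
  then have "K$p$r = 0" for p r by (simp add: KN)
  then have "D1$(p,p)$(r,r) = gram U p r / of_nat CARD('n)" for p r
    by (simp add: K_def gram_state_diag)
  then show ?thesis by (intro gram_state_eqI block(1))
qed

theorem gram_state_extreme: "gram_state U extreme_point_of Gamma"
  unfolding extreme_point_of_def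
proof (intro conjI ballI notI)
  show "gram_state U \<in> Gamma" using gram_state_diagonal unit by blast
  fix D1 D2 assume D1: "D1 \<in> Gamma" and D2: "D2 \<in> Gamma" and "gram_state U \<in> open_segment D1 D2"
  then obtain u where ne: "D1 \<noteq> D2" and u: "0 < u" "u < 1"
    and comb: "gram_state U = (1 - u) *\<^sub>R D1 + u *\<^sub>R D2"
    unfolding in_segment by blast
  have psd: "psd D1" "psd D2" using D1 D2 by (auto simp: Gamma_def density_def)
  have comb': "gram_state U = (1 - (1 - u)) *\<^sub>R D2 + (1 - u) *\<^sub>R D1"
    using comb by (simp add: algebra_simps)
  have "D1 = gram_state U"
    by (rule isotropic_face_eq[OF D1], rule psd_convex_isotropic[OF psd(1,2), of u]) (use u comb in auto)
  moreover have "D2 = gram_state U"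
    by (rule isotropic_face_eq[OF D2], rule psd_convex_isotropic[OF psd(2,1), of "1 - u"])
      (use u comb' in auto)
  ultimately show False using ne by simp
qed

definition diag_col :: "'n \<Rightarrow> complex^('n \<times> 'n)" where
  "diag_col t = diag_lift (column t U)"

lemma diag_col_entry: "diag_col t $ c = (if fst c = snd c then U$(fst c)$t else 0)"
  by (simp add: diag_col_def diag_lift_def column_def)

text \<open>Row (p,p) of gram_state U is (1/n) \<Sum>_t conj(U_pt) diag_col t; other rows vanish.\<close>
lemma rows_gram_state_in_span: "rows (gram_state U) \<subseteq> vec.span (diag_col ` T)"
proof -
  let ?n = "of_nat CARD('n) :: complex"
  have rowpp: "row (p,p) (gram_state U) = (\<Sum>t\<in>T. (cnj (U$p$t) / ?n) *s diag_col t)" for p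
  proof -
    have "row (p,p) (gram_state U) = (\<Sum>t\<in>UNIV. (cnj (U$p$t) / ?n) *s diag_col t)"
      by (simp add: row_def vec_eq_iff gram_state_def gram_def diag_col_entry sum_divide_distrib
          algebra_simps if_distrib[of "\<lambda>x. _ * x"] cong: if_cong)
    also have "\<dots> = (\<Sum>t\<in>T. (cnj (U$p$t) / ?n) *s diag_col t)"
      by (rule sum.mono_neutral_right) (auto simp: supp_zero)
    finally show ?thesis .
  qed
  show ?thesis
  proof
    fix v assume "v \<in> rows (gram_state U)"
    then obtain r where v: "v = row r (gram_state U)" by (auto simp: rows_def)
    show "v \<in> vec.span (diag_col ` T)"
    proof (cases "fst r = snd r")
      case True
      then obtain p where rp: "r = (p,p)" by (metis prod.collapse)
      show ?thesis unfolding v rp rowpp by (intro vec.span_sum vec.span_scale vec.span_base) auto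
    next
      case False
      then have "v = 0" by (simp add: v row_def vec_eq_iff gram_state_off1)
      then show ?thesis by (simp add: vec.span_zero)
    qed
  qed
qed

text \<open>Conversely diag_col t = n \<Sum>_p conj(W_pt) row (p,p), with W the left inverse.\<close>
lemma diag_col_in_span_rows:
  assumes t: "t \<in> T"
  shows "diag_col t \<in> vec.span (rows (gram_state U))"
proof -
  let ?n = "of_nat CARD('n) :: complex"
  obtain W where W1: "\<And>s t. s \<in> T \<Longrightarrow> t \<in> T \<Longrightarrow> (\<Sum>j\<in>UNIV. U$j$s * W j t) = (if s = t then 1 else 0)"
    using left_inverse by metis
  have "(\<Sum>p\<in>UNIV. (?n * cnj (W p t)) *s row (p,p) (gram_state U)) $ c = diag_col t $ c" for c
  proof (cases "fst c = snd c")
    case True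
    then obtain q where c: "c = (q,q)" by (metis prod.collapse)
    have "(\<Sum>p\<in>UNIV. (?n * cnj (W p t)) *s row (p,p) (gram_state U)) $ c
        = (\<Sum>p\<in>UNIV. \<Sum>s\<in>UNIV. cnj (U$p$s * W p t) * U$q$s)"
      unfolding c by (simp add: row_def gram_state_def gram_def sum_distrib_left sum_divide_distrib
          algebra_simps)
    also have "\<dots> = (\<Sum>s\<in>UNIV. cnj (\<Sum>p\<in>UNIV. U$p$s * W p t) * U$q$s)"
      by (subst sum.swap) (simp add: sum_distrib_right)
    also have "\<dots> = (\<Sum>s\<in>UNIV. if s = t then U$q$s else 0)"
    proof (rule sum.cong[OF refl])
      fix s
      show "cnj (\<Sum>p\<in>UNIV. U$p$s * W p t) * U$q$s = (if s = t then U$q$s else 0)"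
      proof (cases "s \<in> T")
        case True
        then show ?thesis using W1[OF True t] by auto
      next
        case False
        then show ?thesis using supp_zero[OF False, of q] t by auto
      qed
    qed
    finally show ?thesis by (simp add: diag_col_entry c)
  next
    case False
    then show ?thesis by (simp add: diag_col_entry row_def gram_state_off2)
  qed
  then have "diag_col t = (\<Sum>p\<in>UNIV. (?n * cnj (W p t)) *s row (p,p) (gram_state U))"
    by (simp add: vec_eq_iff)
  also have "\<dots> \<in> vec.span (rows (gram_state U))"
    by (intro vec.span_sum vec.span_scale vec.span_base) (auto simp: rows_def)
  finally show ?thesis .
qed

lemma span_rows_gram_state: "vec.span (rows (gram_state U)) = vec.span (diag_col ` T)"
  unfolding vec.span_eq using rows_gram_state_in_span diag_col_in_span_rows by blast

text \<open>The diag_col t, t \<in> T, are distinct and linearly independent (W is a left inverse).\<close>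
lemma diag_col_independent: "inj_on diag_col T" "vec.independent (diag_col ` T)"
proof -
  obtain W where W1: "\<And>s t. s \<in> T \<Longrightarrow> t \<in> T \<Longrightarrow> (\<Sum>j\<in>UNIV. U$j$s * W j t) = (if s = t then 1 else 0)"
    using left_inverse by metis
  show inj: "inj_on diag_col T"
  proof (rule inj_onI)
    fix t t' assume t: "t \<in> T" and t': "t' \<in> T" and e: "diag_col t = diag_col t'"
    have "U$q$t = U$q$t'" for q using arg_cong[where f="\<lambda>v. v $ (q,q)", OF e] by (simp add: diag_col_entry)
    then have "(\<Sum>j\<in>UNIV. U$j$t * W j t) = (\<Sum>j\<in>UNIV. U$j$t' * W j t)" by simp
    then show "t = t'" using W1[OF t t] W1[OF t' t] by (auto split: if_splits)
  qed
  show "vec.independent (diag_col ` T)"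
  proof (rule vec.independent_if_scalars_zero)
    show "finite (diag_col ` T)" by simp
    fix f x assume s: "(\<Sum>x\<in>diag_col ` T. f x *s x) = 0" and x: "x \<in> diag_col ` T"
    then obtain t0 where t0: "t0 \<in> T" "x = diag_col t0" by blast
    have s': "(\<Sum>t\<in>T. f (diag_col t) *s diag_col t) = 0" using s by (simp add: sum.reindex[OF inj])
    have q: "(\<Sum>t\<in>T. f (diag_col t) * U$q$t) = 0" for q
      using arg_cong[where f="\<lambda>v. v $ (q,q)", OF s'] by (simp add: diag_col_entry)
    have "0 = (\<Sum>q\<in>UNIV. (\<Sum>t\<in>T. f (diag_col t) * U$q$t) * W q t0)" using q by simp
    also have "\<dots> = (\<Sum>t\<in>T. f (diag_col t) * (\<Sum>q\<in>UNIV. U$q$t * W q t0))"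
      by (simp add: sum_distrib_left sum_distrib_right algebra_simps) (rule sum.swap)
    also have "\<dots> = (\<Sum>t\<in>T. if t = t0 then f (diag_col t) else 0)"
      by (rule sum.cong) (use W1 t0 in auto)
    also have "\<dots> = f x" using t0 by simp
    finally show "f x = 0" by simp
  qed
qed

theorem rank_gram_state: "rank (gram_state U) = card T"
proof -
  have "rank (gram_state U) = vec.dim (vec.span (diag_col ` T))"
    unfolding row_rank_def_gen span_rows_gram_state[symmetric] by simp
  also have "\<dots> = vec.dim (diag_col ` T)" by simp
  also have "\<dots> = card (diag_col ` T)" by (rule vec.dim_eq_card_independent[OF diag_col_independent(2)])
  also have "\<dots> = card T" by (rule card_image[OF diag_col_independent(1)])
  finally show ?thesis .
qed

end

section \<open>Spanning frames are dense among frames supported on T when |T|^2 \<le> n\<close>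

lemma norm_axis: "norm (axis i (x::complex)) = norm x"
proof -
  have "(\<Sum>j\<in>UNIV. (norm (axis i x $ j))^2) = (\<Sum>j\<in>UNIV. if j = i then (norm x)^2 else 0)"
    by (rule sum.cong) (auto simp: axis_def)
  then show ?thesis unfolding norm_vec_def L2_set_def by simp
qed

lemma block_basis_independent: "vec.independent (block_basis T)"
  by (rule vec.independent_mono[OF independent_cart_basis]) (auto simp: block_basis_def cart_basis_def)

lemma card_block_basis: "card (block_basis T) = card T * card T"
proof -
  have "inj_on (\<lambda>z. axis z (1::complex)) (T \<times> T)"
    by (rule inj_onI) (simp add: axis_eq_axis)
  then show ?thesis unfolding block_basis_def by (simp add: card_image card_cartesian_product)
qed

lemma dim_span_block_basis: "vec.dim (vec.span (block_basis T)) = card T * card T"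
  using vec.dim_span_eq_card_independent[OF block_basis_independent[of T]] card_block_basis[of T] by simp

lemma outer_vec_in_span_block_basis:
  assumes "supported_on T x"
  shows "outer_vec x \<in> vec.span (block_basis T)"
proof -
  have "outer_vec x = (\<Sum>z\<in>UNIV. (outer_vec x $ z) *s axis z 1)" by (simp add: basis_expansion)
  also have "\<dots> = (\<Sum>z\<in>T \<times> T. (outer_vec x $ z) *s axis z 1)"
    by (rule sum.mono_neutral_right) (use assms in \<open>auto simp: outer_vec_def supported_on_def\<close>)
  also have "\<dots> \<in> vec.span (block_basis T)"
    by (intro vec.span_sum vec.span_scale vec.span_base) (auto simp: block_basis_def)
  finally show ?thesis .
qed

text \<open>Polarization: a b^* + b a^* is a combination of rank-one matrices near v v^*.\<close>
definition polar_sum :: "complex^'n \<Rightarrow> complex^'n \<Rightarrow> complex^('n \<times> 'n)" where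
  "polar_sum a b = (\<chi> z. a$(fst z) * cnj (b$(snd z)) + b$(fst z) * cnj (a$(snd z)))"

lemma polar_sum_outer_vec:
  "polar_sum a b = outer_vec (v + a + b) - outer_vec (v + a) - outer_vec (v + b) + outer_vec v"
  by (simp add: polar_sum_def outer_vec_def vec_eq_iff algebra_simps)

text \<open>If x x^* lies in span B for all x in a neighbourhood of v within C^T, then
  span B contains all of M_T: E_ts is a combination of two polar sums of small vectors.\<close>
lemma local_rank_one_span:
  fixes v :: "complex^'n::finite"
  assumes v: "supported_on T v" and d: "\<delta> > 0"
    and H: "\<And>x. supported_on T x \<Longrightarrow> norm (x - v) < \<delta> \<Longrightarrow> outer_vec x \<in> vec.span B"
  shows "block_basis T \<subseteq> vec.span B"
proof
  fix E assume "E \<in> block_basis T"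
  then obtain t s where ts: "t \<in> T" "s \<in> T" and E: "E = axis (t,s) 1" by (auto simp: block_basis_def)
  define e where "e = \<delta> / 4"
  have e0: "e > 0" using d by (simp add: e_def)
  have polar_in: "polar_sum a b \<in> vec.span B"
    if a: "supported_on T a" "norm a = e" and b: "supported_on T b" "norm b = e" for a b
  proof -
    have sv: "supported_on T (v + a)" "supported_on T (v + b)" "supported_on T (v + a + b)"
      using v a b by (auto simp: supported_on_def)
    have "norm (v + a + b - v) \<le> norm a + norm b" by (simp add: norm_triangle_ineq)
    then have n1: "norm (v + a + b - v) < \<delta>" using a b d by (simp add: e_def)
    have n2: "norm (v + a - v) < \<delta>" "norm (v + b - v) < \<delta>" "norm (v - v) < \<delta>"
      using a b d by (auto simp: e_def)
    show ?thesis unfolding polar_sum_outer_vec[of a b v]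
      by (intro vec.span_add vec.span_diff H sv v n1 n2)
  qed
  let ?c = "complex_of_real e"
  have s1: "supported_on T (axis t ?c)" "supported_on T (axis s ?c)" "supported_on T (axis s (\<i> * ?c))"
    using ts by (auto simp: supported_on_def axis_def)
  have nn: "norm (axis t ?c) = e" "norm (axis s ?c) = e" "norm (axis s (\<i> * ?c)) = e"
    using e0 by (auto simp: norm_axis norm_mult)
  have "E = (1 / (2 * ?c * ?c)) *s (polar_sum (axis t ?c) (axis s ?c)
                                   + \<i> *s polar_sum (axis t ?c) (axis s (\<i> * ?c)))"
    using e0 unfolding E by (auto simp: vec_eq_iff polar_sum_def axis_def field_simps)
  also have "\<dots> \<in> vec.span B"
    using polar_in s1 nn by (intro vec.span_scale vec.span_add) auto
  finally show "E \<in> vec.span B" .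
qed

lemma escape_span:
  fixes v :: "complex^'n::finite"
  assumes v: "supported_on T v" and d: "\<delta> > 0" and B: "finite B" "card B < card T * card T"
  obtains x where "supported_on T x" "norm (x - v) < \<delta>" "outer_vec x \<notin> vec.span B"
proof (rule ccontr)
  assume "\<not> thesis"
  then have "block_basis T \<subseteq> vec.span B"
    using that by (intro local_rank_one_span[OF v d]) blast
  then have "card (block_basis T) \<le> card B"
    using vec.independent_span_bound[OF B(1) block_basis_independent] by blast
  then show False using B(2) card_block_basis[of T] by linarith
qed

text \<open>Greedy perturbation: the rows indexed by J can be moved, one at a time, so that their
  rank-one matrices become linearly independent.\<close>
lemma independent_perturbation:
  fixes X :: "complex^'n::finite^'n" and J :: "'n set"
  assumes X: "\<And>p. supported_on T (X$p)" and d: "\<delta> > 0"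
  shows "finite J \<Longrightarrow> card J \<le> card T * card T \<Longrightarrow>
    \<exists>Y. (\<forall>p. supported_on T (Y$p)) \<and> (\<forall>p. norm (Y$p - X$p) < \<delta>)
      \<and> inj_on (\<lambda>j. outer_vec (Y$j)) J \<and> vec.independent ((\<lambda>j. outer_vec (Y$j)) ` J)"
proof (induction J rule: finite_induct)
  case empty
  show ?case by (intro exI[of _ X]) (use X d vec.independent_empty in auto)
next
  case (insert j J)
  then have cJ: "card J < card T * card T" by simp
  obtain Y :: "complex^'n^'n" where Ys: "\<forall>p. supported_on T (Y$p)" and Yn: "\<forall>p. norm (Y$p - X$p) < \<delta>"
    and Yi: "inj_on (\<lambda>j. outer_vec (Y$j)) J" and Yind: "vec.independent ((\<lambda>j. outer_vec (Y$j)) ` J)"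
    using insert.IH cJ by auto
  let ?B = "(\<lambda>j. outer_vec (Y$j)) ` J"
  have "card ?B < card T * card T" using card_image_le[OF insert(1)] cJ by (meson le_less_trans)
  then obtain x where xs: "supported_on T x" and xn: "norm (x - X$j) < \<delta>"
    and xsp: "outer_vec x \<notin> vec.span ?B"
    using escape_span[OF X d] insert(1) by blast
  define Y' where "Y' = (\<chi> p. if p = j then x else Y$p)"
  have imgJ: "(\<lambda>i. outer_vec (Y'$i)) ` J = ?B"
    by (rule image_cong[OF refl]) (use insert(2) in \<open>auto simp: Y'_def\<close>)
  have Yj: "Y'$j = x" by (simp add: Y'_def)
  have notin: "outer_vec x \<notin> ?B" using xsp by (metis vec.span_base)
  show ?case
  proof (intro exI[of _ Y'] conjI allI)
    show "supported_on T (Y'$p)" for p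
      by (cases "p = j") (simp_all add: Y'_def xs Ys)
    show "norm (Y'$p - X$p) < \<delta>" for p
      by (cases "p = j") (simp_all add: Y'_def xn Yn)
    have "inj_on (\<lambda>i. outer_vec (Y'$i)) J"
      using Yi by (rule inj_on_cong[THEN iffD2, rotated]) (use insert(2) in \<open>auto simp: Y'_def\<close>)
    then show "inj_on (\<lambda>i. outer_vec (Y'$i)) (insert j J)"
      using insert(2) notin by (simp add: imgJ Yj insert_Diff_if)
    show "vec.independent ((\<lambda>i. outer_vec (Y'$i)) ` insert j J)"
      unfolding image_insert imgJ Yj using Yind xsp by (rule vec.independent_insertI[rotated])
  qed
qed

text \<open>Since |T|^2 \<le> n, independent rank-one matrices of |T|^2 perturbed rows span M_T.\<close>
lemma spanning_perturbation:
  fixes X :: "complex^'n::finite^'n" and T :: "'n set"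
  assumes X: "\<And>p. supported_on T (X$p)" and d: "\<delta> > 0" and cT: "card T * card T \<le> CARD('n)"
  obtains Y where "\<And>p. supported_on T (Y$p)" "\<And>p. norm (Y$p - X$p) < \<delta>"
    and "block_basis T \<subseteq> vec.span (range (\<lambda>j. outer_vec (Y$j)))"
proof -
  obtain J :: "'n set" where J: "card J = card T * card T"
    using obtain_subset_with_card_n[of "card T * card T" "UNIV :: 'n set"] cT by auto
  obtain Y :: "complex^'n^'n" where Ys: "\<forall>p. supported_on T (Y$p)" and Yn: "\<forall>p. norm (Y$p - X$p) < \<delta>"
    and Yi: "inj_on (\<lambda>j. outer_vec (Y$j)) J" and Yind: "vec.independent ((\<lambda>j. outer_vec (Y$j)) ` J)"
    using independent_perturbation[OF X d, of J] J by auto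
  let ?B = "(\<lambda>j. outer_vec (Y$j)) ` J"
  have "?B \<subseteq> vec.span (block_basis T)" using Ys outer_vec_in_span_block_basis by blast
  moreover have "card ?B = vec.dim (vec.span (block_basis T))"
    using card_image[OF Yi] J dim_span_block_basis[of T] by simp
  ultimately have "vec.span (block_basis T) \<subseteq> vec.span ?B"
    using vec.card_eq_dim[of ?B] Yind by simp
  moreover have "vec.span ?B \<subseteq> vec.span (range (\<lambda>j. outer_vec (Y$j)))" by (rule vec.span_mono) auto
  ultimately have "block_basis T \<subseteq> vec.span (range (\<lambda>j. outer_vec (Y$j)))"
    using vec.span_superset by blast
  then show ?thesis using Ys Yn that by blast
qed

section \<open>Diagonal states are Gram states, and Gram states are approximated by spanning ones\<close>

text \<open>In a decomposition D = \<Sum>_t w_t w_t^* of a diagonal state, every w_t vanishes on the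
  coordinates (p,q), p \<noteq> q, because the diagonal entry D_{pq,pq} = \<Sum>_t |(w_t)_pq|^2 is zero.\<close>
lemma diagonal_state_outer_terms:
  fixes D :: "'n::finite tmat" and T :: "'b set"
  assumes Dd: "D \<in> diagonal_states" and Dw: "D = (\<Sum>t\<in>T. outer (w t))"
    and T: "finite T" "t \<in> T" and pq: "p \<noteq> q"
  shows "w t $ (p,q) = 0"
proof -
  have "complex_of_real (\<Sum>t\<in>T. (cmod (w t $ (p,q)))^2) = D$(p,q)$(p,q)"
    unfolding Dw sum_cnj_real[symmetric] by (simp add: outer_def mult.commute)
  also have "\<dots> = 0" using diagonal_state_entries[OF Dd, of p q] pq by simp
  finally have "(\<Sum>t\<in>T. (cmod (w t $ (p,q)))^2) = 0" by (simp only: of_real_eq_0_iff)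
  then show ?thesis using T by (simp add: sum_nonneg_eq_0_iff)
qed

text \<open>Every diagonal state of rank at most |T| is the Gram state of unit rows supported on T:
  writing D = \<Sum>_{t\<in>T} w_t w_t^*, the w_t vanish off the coordinates (p,p), and the rows
  X_p = sqrt n (conj (w_t)_pp)_t have Gram matrix n (D_{pp,rr})_{p,r}.\<close>
lemma diagonal_state_gram_form:
  fixes D :: "'n::finite tmat" and T :: "'n set"
  assumes Dd: "D \<in> diagonal_states" and Dr: "rank D \<le> card T"
  obtains X :: "complex^'n^'n"
  where "\<And>p. supported_on T (X$p)" "\<And>p. norm (X$p) = 1" "D = gram_state X"
proof -
  let ?n = "CARD('n)"
  have "psd D" using Dd by (simp add: diagonal_states_def Gamma_def density_def)
  then obtain w where Dw: "D = (\<Sum>t\<in>T. outer (w t))"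
    using psd_sum_of_outer[of T D] Dr by auto
  then have Dent: "D$r$c = (\<Sum>t\<in>T. w t $ r * cnj (w t $ c))" for r c
    by (simp add: outer_def)
  have woff: "w t $ (p,q) = 0" if "t \<in> T" "p \<noteq> q" for t p q
    using diagonal_state_outer_terms[OF Dd Dw _ that] by simp
  define sn where "sn = complex_of_real (sqrt (real ?n))"
  have sn2: "cnj sn * sn = of_nat ?n" by (simp add: sn_def of_real_mult[symmetric])
  define X :: "complex^'n^'n" where "X = (\<chi> p t. if t \<in> T then sn * cnj (w t $ (p,p)) else 0)"
  have gram_X: "gram X p r = of_nat ?n * D$(p,p)$(r,r)" for p r
  proof -
    have "gram X p r = (\<Sum>t\<in>UNIV. if t \<in> T then (cnj sn * sn) * (w t $ (p,p) * cnj (w t $ (r,r))) else 0)"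
      unfolding gram_def X_def by (intro sum.cong) (auto simp: algebra_simps)
    also have "\<dots> = (\<Sum>t\<in>T. (cnj sn * sn) * (w t $ (p,p) * cnj (w t $ (r,r))))"
      by (simp add: sum.If_cases)
    finally show ?thesis unfolding Dent sn2 by (simp add: sum_distrib_left)
  qed
  have "norm (X$p) = 1" for p
  proof -
    have "complex_of_real ((norm (X$p))^2) = gram X p p" unfolding gram_def by (simp add: sum_cnj_norm)
    also have "\<dots> = 1" unfolding gram_X diagonal_state_entries[OF Dd] by simp
    finally have "(norm (X$p))^2 = 1" by (simp only: of_real_eq_1_iff)
    then show ?thesis using norm_ge_zero[of "X$p"] by (simp add: power2_eq_1_iff)
  qed
  moreover have "D = gram_state X"
  proof (rule gram_state_eqI)
    show "D$r$c = 0" if "fst r \<noteq> snd r \<or> fst c \<noteq> snd c" for r c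
      unfolding Dent using that woff by (cases r; cases c) (auto intro!: sum.neutral)
    show "D$(p,p)$(q,q) = gram X p q / of_nat ?n" for p q by (simp add: gram_X)
  qed
  moreover have "supported_on T (X$p)" for p by (simp add: supported_on_def X_def)
  ultimately show ?thesis using that by blast
qed

lemma outer_vec_sgn: "outer_vec x = complex_of_real ((norm x)^2) *s outer_vec (sgn x)"
proof (cases "x = 0")
  case True
  then show ?thesis by (simp add: outer_vec_def vec_eq_iff)
next
  case False
  let ?r = "complex_of_real (norm x)"
  have r: "?r \<noteq> 0" "cnj ?r = ?r" using False by simp_all
  have e: "x$i = ?r * sgn x $ i" for i
    using r by (simp add: sgn_div_norm scaleR_conv_of_real[where 'a=complex])
  have "x$a * cnj (x$b) = ?r^2 * (sgn x $ a * cnj (sgn x $ b))" for a b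
    by (simp only: e[of a] e[of b]) (simp add: r power2_eq_square)
  then show ?thesis by (simp add: outer_vec_def vec_eq_iff)
qed

lemma spanning_frame_sgn:
  fixes Y :: "complex^'n::finite^'n"
  assumes "\<And>p. Y$p \<noteq> 0" "\<And>p. supported_on T (Y$p)"
    and spans: "block_basis T \<subseteq> vec.span (range (\<lambda>j. outer_vec (Y$j)))"
  shows "spanning_frame (\<chi> p. sgn (Y$p)) T"
proof
  show "norm ((\<chi> p. sgn (Y$p)) $ p) = 1" for p using assms(1) by (simp add: norm_sgn)
  show "supported_on T ((\<chi> p. sgn (Y$p)) $ p)" for p
    using assms(2) by (simp add: supported_on_def sgn_div_norm)
  have "range (\<lambda>j. outer_vec (Y$j)) \<subseteq> vec.span (range (\<lambda>j. outer_vec ((\<chi> p. sgn (Y$p)) $ j)))"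
  proof clarify
    fix j
    have "outer_vec ((\<chi> p. sgn (Y$p)) $ j) \<in> vec.span (range (\<lambda>j. outer_vec ((\<chi> p. sgn (Y$p)) $ j)))"
      by (rule vec.span_base) blast
    then show "outer_vec (Y$j) \<in> vec.span (range (\<lambda>j. outer_vec ((\<chi> p. sgn (Y$p)) $ j)))"
      by (subst outer_vec_sgn) (simp add: vec.span_scale)
  qed
  then have "vec.span (range (\<lambda>j. outer_vec (Y$j)))
             \<subseteq> vec.span (range (\<lambda>j. outer_vec ((\<chi> p. sgn (Y$p)) $ j)))"
    by (rule vec.span_minimal[OF _ vec.subspace_span])
  then show "block_basis T \<subseteq> vec.span (range (\<lambda>j. outer_vec ((\<chi> p. sgn (Y$p)) $ j)))"
    using spans by (rule order_trans[rotated])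
qed

lemma isCont_gram_state_sgn:
  fixes X :: "complex^'n::finite^'n"
  assumes "\<And>p. X$p \<noteq> 0"
  shows "isCont (\<lambda>Y. gram_state (\<chi> p. sgn (Y$p))) X"
  unfolding isCont_def gram_state_def gram_def
proof (intro tendsto_vec_lambda)
  fix r c :: "'n \<times> 'n"
  show "((\<lambda>Y. if fst r = snd r \<and> fst c = snd c
                then (\<Sum>t\<in>UNIV. cnj ((\<chi> p. sgn (Y$p)) $ fst r $ t) * (\<chi> p. sgn (Y$p)) $ fst c $ t)
                     / of_nat CARD('n) else 0)
        \<longlongrightarrow> (if fst r = snd r \<and> fst c = snd c
                then (\<Sum>t\<in>UNIV. cnj ((\<chi> p. sgn (X$p)) $ fst r $ t) * (\<chi> p. sgn (X$p)) $ fst c $ t)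
                     / of_nat CARD('n) else 0)) (at X)"
    by (cases "fst r = snd r \<and> fst c = snd c") (auto intro!: tendsto_intros simp: assms)
qed

lemma dist_le_sum_rows: "dist (Y::complex^'n::finite^'m::finite) X \<le> (\<Sum>p\<in>UNIV. norm (Y$p - X$p))"
  unfolding dist_norm norm_vec_def[of "Y - X"] by (rule order_trans[OF L2_set_le_sum]) simp_all

lemma gram_state_approx:
  fixes X :: "complex^'n::finite^'n"
  assumes X: "\<And>p. supported_on T (X$p)" "\<And>p. norm (X$p) = 1"
    and cT: "card T * card T \<le> CARD('n)" and e: "e > 0"
  obtains U where "spanning_frame U T" "dist (gram_state U) (gram_state X) < e"
proof -
  have Xnz: "X$p \<noteq> 0" for p using X(2)[of p] by auto
  have sgnX: "(\<chi> p. sgn (X$p)) = X" by (simp add: vec_eq_iff sgn_div_norm X(2))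
  have "\<forall>e>0. \<exists>d>0. \<forall>Y. dist Y X < d \<longrightarrow>
          dist (gram_state (\<chi> p. sgn (Y$p))) (gram_state (\<chi> p. sgn (X$p))) < e"
    using isCont_gram_state_sgn[OF Xnz] unfolding continuous_at_eps_delta by simp
  then obtain d0 where d0: "d0 > 0"
    and cont: "\<And>Y. dist Y X < d0 \<Longrightarrow> dist (gram_state (\<chi> p. sgn (Y$p))) (gram_state X) < e"
    using e unfolding sgnX by blast
  define d where "d = min 1 (d0 / real CARD('n))"
  have d: "d > 0" "d \<le> 1" using d0 by (auto simp: d_def)
  obtain Y where Ys: "\<And>p. supported_on T (Y$p)" and Yn: "\<And>p. norm (Y$p - X$p) < d"
    and Ysp: "block_basis T \<subseteq> vec.span (range (\<lambda>j. outer_vec (Y$j)))"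
    using spanning_perturbation[OF X(1) d(1) cT] by blast
  have "Y$p \<noteq> 0" for p using Yn[of p] X(2)[of p] d(2) by auto
  then have frame: "spanning_frame (\<chi> p. sgn (Y$p)) T" using Ys Ysp by (rule spanning_frame_sgn)
  have "dist Y X \<le> (\<Sum>p\<in>UNIV. norm (Y$p - X$p))" by (rule dist_le_sum_rows)
  also have "\<dots> < (\<Sum>p::'n\<in>UNIV. d)" using Yn by (intro sum_strict_mono) auto
  also have "\<dots> = real CARD('n) * d" by simp
  also have "\<dots> \<le> d0"
    using mult_left_mono[OF min.cobounded2[of 1 "d0 / real CARD('n)"], of "real CARD('n)"]
    by (simp add: d_def)
  finally show ?thesis using that[OF frame] cont by blast
qed

section \<open>The density theorem\<close>

lemma (in spanning_frame) gram_state_target: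
  "gram_state U \<in> {D \<in> diagonal_states. D extreme_point_of Gamma \<and> rank D = card T}"
  using gram_state_diagonal(2)[OF unit] gram_state_extreme rank_gram_state by simp

lemma diagonal_state_closure:
  fixes T :: "'n::finite set" and D :: "'n tmat"
  assumes cT: "card T * card T \<le> CARD('n)" and Dd: "D \<in> diagonal_states" and Dr: "rank D \<le> card T"
  shows "D \<in> closure {D \<in> diagonal_states. D extreme_point_of Gamma \<and> rank D = card T}"
proof -
  obtain X where X: "\<And>p. supported_on T (X$p)" "\<And>p. norm (X$p) = 1" and DX: "D = gram_state X"
    using diagonal_state_gram_form[OF Dd Dr] by metis
  show ?thesis unfolding closure_approachable
  proof (intro allI impI)
    fix e :: real assume "e > 0"
    then obtain U where U: "spanning_frame U T" and "dist (gram_state U) D < e"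
      using gram_state_approx[OF X cT, folded DX] by metis
    then show "\<exists>y\<in>{D \<in> diagonal_states. D extreme_point_of Gamma \<and> rank D = card T}. dist y D < e"
      using spanning_frame.gram_state_target[OF U] by blast
  qed
qed

text \<open>A state has trace one, so its density is nonzero.\<close>
lemma diagonal_state_rank_pos:
  assumes "D \<in> diagonal_states"
  shows "rank D \<noteq> 0"
proof
  assume "rank D = 0"
  then have "D = 0" by (rule rank_zero_mat)
  then show False using assms by (simp add: diagonal_states_def Gamma_def density_def trace_def)
qed

theorem theorem3p4:
  fixes a :: nat
  assumes "a^2 \<le> CARD('n::finite)"
  shows "{D \<in> (diagonal_states :: 'n tmat set). rank D \<le> a}
           \<subseteq> closure {D \<in> (diagonal_states :: 'n tmat set). D extreme_point_of Gamma \<and> rank D = a}"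
proof
  fix D :: "'n tmat"
  assume "D \<in> {D \<in> (diagonal_states :: 'n tmat set). rank D \<le> a}"
  then have Dd: "D \<in> diagonal_states" and Dr: "rank D \<le> a" by auto
  have "a \<le> a^2" using diagonal_state_rank_pos[OF Dd] Dr by (simp add: power2_eq_square)
  then obtain T :: "'n set" where cT: "card T = a"
    using obtain_subset_with_card_n[of a "UNIV :: 'n set"] assms by auto
  then show "D \<in> closure {D \<in> diagonal_states. D extreme_point_of Gamma \<and> rank D = a}"
    using diagonal_state_closure[of T D] assms Dd Dr by (simp add: power2_eq_square)
qed

end
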